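(* Let $n\ge2$ and let $h:\mathbb{B}^n\to\mathbb{B}^n$ be a Möbius transformation mapping $\mathbb{B}^n$ onto itself. Then for all $x,y\in\mathbb{B}^n$ and each $d\in\{j^*,w,s,p\}$, $$d_{\mathbb{B}^n}(h(x),h(y))\le\frac{2d_{\mathbb{B}^n}(x,y)}{1+d_{\mathbb{B}^n}(x,y)^2}\le2d_{\mathbb{B}^n}(x,y),$$ and the constant $2$ in the second (linear) bound $d_{\mathbb{B}^n}(h(x),h(y))\le 2d_{\mathbb{B}^n}(x,y)$ is sharp.
   Context: $\mathbb{B}^n$ is the unit ball; $S^{n-1}(x,r)$ is the Euclidean sphere of center $x$ and radius $r$. A Möbius transformation of $\overline{\mathbb{R}}^n=\mathbb{R}^n\cup\{\infty\}$ is a finite composition of reflections in hyperplanes and inversions in spheres. For a domain $G\subsetneq\mathbb{R}^n$ and $x\in G$, $d_G(x)=\inf\{|x-z|:z\in\partial G\}$. $j^*_G(x,y)=\frac{|x-y|}{|x-y|+2\min\{d_G(x),d_G(y)\}}$; $s_G(x,y)=\frac{|x-y|}{\inf_{z\in\partial G}(|x-z|+|z-y|)}$; $p_G(x,y)=\frac{|x-y|}{\sqrt{|x-y|^2+4d_G(x)d_G(y)}}$; for convex $G$, $w_G(x,y)=\frac{|x-y|}{\min\{\inf_{\tilde y\in\tilde Y}|x-\tilde y|,\ \inf_{\tilde x\in\tilde X}|y-\tilde x|\}}$ with $\tilde X=\{\tilde x\in S^{n-1}(x,2d_G(x)):(x+\tilde x)/2\in\partial G\}$, $\tilde Y=\{\tilde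 y\in S^{n-1}(y,2d_G(y)):(y+\tilde y)/2\in\partial G\}$. *)

theory Defs
  imports "HOL-Analysis.Analysis"
begin

text \<open>Extended space: the type 'a option, where None plays the role of the point at infinity.\<close>

definition hyperplane_reflection :: "'a::euclidean_space \<Rightarrow> real \<Rightarrow> 'a option \<Rightarrow> 'a option" where
  "hyperplane_reflection a t p =
     (case p of None \<Rightarrow> None
      | Some x \<Rightarrow> Some (x - (2 * (a \<bullet> x - t) / (a \<bullet> a)) *\<^sub>R a))"

definition sphere_inversion :: "'a::euclidean_space \<Rightarrow> real \<Rightarrow> 'a option \<Rightarrow> 'a option" where
  "sphere_inversion c r p =
     (case p of None \<Rightarrow> Some c
      | Some x \<Rightarrow> (if x = c then None
                   else Some (c + (r\<^sup>2 / (norm (x - c))\<^sup>2) *\<^sub>R (x - c))))"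

inductive_set mobius :: "('a::euclidean_space option \<Rightarrow> 'a option) set" where
  reflection: "a \<noteq> 0 \<Longrightarrow> hyperplane_reflection a t \<in> mobius"
| inversion: "r > 0 \<Longrightarrow> sphere_inversion c r \<in> mobius"
| comp: "f \<in> mobius \<Longrightarrow> g \<in> mobius \<Longrightarrow> f \<circ> g \<in> mobius"

definition bdist :: "'a::euclidean_space set \<Rightarrow> 'a \<Rightarrow> real" where
  "bdist G x = Inf ((\<lambda>z. dist x z) ` frontier G)"

definition jstar_metric :: "'a::euclidean_space set \<Rightarrow> 'a \<Rightarrow> 'a \<Rightarrow> real" where
  "jstar_metric G x y = dist x y / (dist x y + 2 * min (bdist G x) (bdist G y))"

definition s_metric :: "'a::euclidean_space set \<Rightarrow> 'a \<Rightarrow> 'a \<Rightarrow> real" where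
  "s_metric G x y = dist x y / Inf ((\<lambda>z. dist x z + dist z y) ` frontier G)"

definition p_metric :: "'a::euclidean_space set \<Rightarrow> 'a \<Rightarrow> 'a \<Rightarrow> real" where
  "p_metric G x y = dist x y / sqrt ((dist x y)\<^sup>2 + 4 * bdist G x * bdist G y)"

definition w_refl_set :: "'a::euclidean_space set \<Rightarrow> 'a \<Rightarrow> 'a set" where
  "w_refl_set G x = {u \<in> sphere x (2 * bdist G x). (1/2) *\<^sub>R (x + u) \<in> frontier G}"

definition w_metric :: "'a::euclidean_space set \<Rightarrow> 'a \<Rightarrow> 'a \<Rightarrow> real" where
  "w_metric G x y = dist x y /
     min (Inf ((\<lambda>v. dist x v) ` w_refl_set G y)) (Inf ((\<lambda>u. dist y u) ` w_refl_set G x))"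

definition ball_mobius :: "('a::euclidean_space option \<Rightarrow> 'a option) \<Rightarrow> bool" where
  "ball_mobius h \<longleftrightarrow> h \<in> mobius \<and> h ` (Some ` ball 0 1) = Some ` ball 0 1"

end

(* On the unit ball each of the four metrics d lies between j* and p, and a direct
   computation gives p <= tanh(rho/2) <= 2 j* / (1 + j*^2), where rho is the hyperbolic
   distance. Since t |-> 2t/(1 + t^2) is increasing on [0, 1], this yields
   d <= tanh(rho/2) <= 2 d / (1 + d^2). A Moebius self-map of the ball preserves
   tanh(rho/2), so d(h x, h y) <= tanh(rho/2)(x, y) <= 2 d(x, y) / (1 + d(x, y)^2).
   The invariance is obtained by lifting Moebius maps to linear maps that scale a
   Lorentzian form, acting on the light cone over the extended space; a map preserving
   the ball also fixes, up to scale, the pole of the unit sphere. Sharpness: an inversion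
   in a sphere orthogonal to the unit sphere sends the pair -eta e, eta e near the
   origin, where d is about eta, to a pair near the boundary with j* about 2 eta. *)

theory Submission
  imports Defs
begin

lemma two_div_one_plus_sq_mono:
  fixes s t :: real
  assumes "0 \<le> s" "s \<le> t" "t \<le> 1"
  shows "2 * s / (1 + s\<^sup>2) \<le> 2 * t / (1 + t\<^sup>2)"
proof -
  have "0 \<le> (t - s) * (1 - s * t)"
    using assms by (intro mult_nonneg_nonneg) (auto simp: mult_le_one)
  then have "2 * s * (1 + t\<^sup>2) \<le> 2 * t * (1 + s\<^sup>2)"
    by (simp add: algebra_simps power2_eq_square)
  then show ?thesis
    by (simp add: field_simps add_pos_nonneg)
qed

lemma two_div_one_plus_sq_le:
  fixes t :: real
  assumes "0 \<le> t"
  shows "2 * t / (1 + t\<^sup>2) \<le> 2 * t"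
proof -
  have "2 * t * 1 \<le> 2 * t * (1 + t\<^sup>2)"
    using assms by (intro mult_left_mono) auto
  then show ?thesis
    by (simp add: divide_le_eq add_pos_nonneg)
qed

lemma mult_two_minus_mono:
  fixes a m :: real
  assumes "m \<le> a" "a + m \<le> 2"
  shows "m * (2 - m) \<le> a * (2 - a)"
proof -
  have "0 \<le> (a - m) * (2 - a - m)"
    using assms by (intro mult_nonneg_nonneg) auto
  then show ?thesis
    by (simp add: algebra_simps)
qed

lemma ratio_le_double_jstar:
  fixes m D :: real
  assumes "0 < m" "0 \<le> D" "D + 2 * m \<le> 2"
  shows "D / sqrt (D\<^sup>2 + (m * (2 - m))\<^sup>2) \<le> 2 * (D / (D + 2 * m)) / (1 + (D / (D + 2 * m))\<^sup>2)"
proof -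
  define v where "v = D + 2 * m"
  define K where "K = m * (2 - m)"
  have v: "0 < v" and K: "0 \<le> K"
    using assms by (auto simp: v_def K_def)
  have "(v\<^sup>2 + D\<^sup>2)\<^sup>2 \<le> (2 * v)\<^sup>2 * (D\<^sup>2 + K\<^sup>2)"
  proof -
    have "(v\<^sup>2 + D\<^sup>2)\<^sup>2 + (2 * v * K - (v\<^sup>2 - D\<^sup>2)) * (2 * v * K + (v\<^sup>2 - D\<^sup>2)) = (2 * v)\<^sup>2 * (D\<^sup>2 + K\<^sup>2)"
      by (simp add: algebra_simps power2_eq_square)
    moreover have "2 * v * K - (v\<^sup>2 - D\<^sup>2) = 2 * m\<^sup>2 * (2 - D - 2 * m)"
      by (simp add: v_def K_def algebra_simps power2_eq_square)
    moreover have "0 \<le> v\<^sup>2 - D\<^sup>2"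
      using assms by (simp add: v_def algebra_simps power2_eq_square)
    ultimately show ?thesis
      using assms v K by (smt (verit) mult_nonneg_nonneg zero_le_power2)
  qed
  then have "v\<^sup>2 + D\<^sup>2 \<le> sqrt ((2 * v)\<^sup>2 * (D\<^sup>2 + K\<^sup>2))"
    by (rule real_le_rsqrt)
  also have "\<dots> = 2 * v * sqrt (D\<^sup>2 + K\<^sup>2)"
    using v by (simp add: real_sqrt_mult)
  finally have "v\<^sup>2 + D\<^sup>2 \<le> 2 * v * sqrt (D\<^sup>2 + K\<^sup>2)" .
  then have "D * (v\<^sup>2 + D\<^sup>2) \<le> D * (2 * v * sqrt (D\<^sup>2 + K\<^sup>2))"
    using assms by (intro mult_left_mono)
  moreover have "0 < v\<^sup>2 + D\<^sup>2"
    using v by (simp add: add_pos_nonneg)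
  moreover have "0 < sqrt (D\<^sup>2 + K\<^sup>2)"
    using assms by (simp add: K_def add_nonneg_pos)
  ultimately have "D / sqrt (D\<^sup>2 + K\<^sup>2) \<le> 2 * D * v / (v\<^sup>2 + D\<^sup>2)"
    by (simp add: field_simps)
  also have "\<dots> = 2 * (D / v) / (1 + (D / v)\<^sup>2)"
    using v by (simp add: field_simps power2_eq_square)
  finally show ?thesis
    by (simp add: v_def K_def)
qed

section \<open>The four metrics on the unit ball\<close>

lemma exists_unit_direction: "\<exists>m::'a::euclidean_space. norm m = 1 \<and> y = norm y *\<^sub>R m"
proof (cases "y = 0")
  case True
  obtain e :: 'a where "e \<in> Basis"
    using nonempty_Basis by blast
  with True show ?thesis
    by (intro exI[of _ e]) auto
next
  case False
  then show ?thesis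
    by (intro exI[of _ "sgn y"]) (simp add: norm_sgn sgn_div_norm)
qed

lemma dist_unit_direction:
  fixes y m :: "'a::euclidean_space"
  assumes "norm m = 1" "y = norm y *\<^sub>R m" "norm y \<le> 1"
  shows "dist y m = 1 - norm y"
proof -
  have "m - y = (1 - norm y) *\<^sub>R m"
    using assms by (metis scaleR_diff_left scaleR_one)
  with assms show ?thesis
    by (simp add: dist_norm norm_minus_commute)
qed

lemma norm_add_scaleR_square:
  fixes a b :: "'a::real_inner"
  shows "(norm (a + c *\<^sub>R b))\<^sup>2 = (norm a)\<^sup>2 + 2 * c * (a \<bullet> b) + c\<^sup>2 * (norm b)\<^sup>2"
  unfolding power2_norm_eq_inner
  by (simp add: inner_commute power2_eq_square algebra_simps)

lemma norm_power2_less_1_iff: "(norm x)\<^sup>2 < 1 \<longleftrightarrow> norm x < 1"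
  using abs_square_less_1[of "norm x"] by simp

lemma bdist_unit_ball:
  fixes x :: "'a::euclidean_space"
  assumes "norm x < 1"
  shows "bdist (ball 0 1) x = 1 - norm x"
proof -
  obtain m :: 'a where m: "norm m = 1" "x = norm x *\<^sub>R m"
    using exists_unit_direction by blast
  have "dist x m = 1 - norm x"
    using dist_unit_direction[OF m] assms by simp
  moreover have "1 - norm x \<le> dist x z" if "z \<in> sphere 0 1" for z
    using that norm_triangle_ineq2[of z x] by (simp add: dist_norm norm_minus_commute)
  ultimately show ?thesis
    unfolding bdist_def frontier_ball[OF zero_less_one]
    using m by (intro cInf_eq_minimum[where z = "1 - norm x"]) (auto intro: rev_image_eqI[of m])
qed

definition p_denominator :: "'a::euclidean_space \<Rightarrow> 'a \<Rightarrow> real" where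
  "p_denominator x y = sqrt ((dist x y)\<^sup>2 + 4 * (1 - norm x) * (1 - norm y))"

definition jstar_denominator :: "'a::euclidean_space \<Rightarrow> 'a \<Rightarrow> real" where
  "jstar_denominator x y = dist x y + 2 * min (1 - norm x) (1 - norm y)"

lemma p_metric_unit_ball:
  fixes x y :: "'a::euclidean_space"
  assumes "norm x < 1" "norm y < 1"
  shows "p_metric (ball 0 1) x y = dist x y / p_denominator x y"
  using assms by (simp add: p_metric_def p_denominator_def bdist_unit_ball mult.assoc)

lemma jstar_metric_unit_ball:
  fixes x y :: "'a::euclidean_space"
  assumes "norm x < 1" "norm y < 1"
  shows "jstar_metric (ball 0 1) x y = dist x y / jstar_denominator x y"
  using assms by (simp add: jstar_metric_def jstar_denominator_def bdist_unit_ball)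

lemma jstar_metric_unit_ball_nonneg:
  fixes x y :: "'a::euclidean_space"
  assumes "norm x < 1" "norm y < 1"
  shows "0 \<le> jstar_metric (ball 0 1) x y"
  using assms by (simp add: jstar_metric_unit_ball jstar_denominator_def)

lemma p_denominator_pos:
  fixes x y :: "'a::euclidean_space"
  assumes "norm x < 1" "norm y < 1"
  shows "0 < p_denominator x y"
  using assms by (simp add: p_denominator_def add_nonneg_pos)

lemma p_denominator_le_jstar_denominator:
  fixes x y :: "'a::euclidean_space"
  assumes "norm x < 1" "norm y < 1"
  shows "p_denominator x y \<le> jstar_denominator x y"
proof -
  define a b D where "a = 1 - norm x" and "b = 1 - norm y" and "D = dist x y"
  have ab: "\<bar>a - b\<bar> \<le> D" "0 < a" "0 < b"
    using assms norm_triangle_ineq3[of y x]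
    by (auto simp: a_def b_def D_def dist_norm norm_minus_commute)
  have "a * b \<le> D * min a b + (min a b)\<^sup>2"
  proof (cases "a \<le> b")
    case True
    then have "a * (b - a) \<le> a * D"
      using ab by (intro mult_left_mono) auto
    with True show ?thesis
      by (simp add: min_def algebra_simps power2_eq_square)
  next
    case False
    then have "b * (a - b) \<le> b * D"
      using ab by (intro mult_left_mono) auto
    with False show ?thesis
      by (simp add: min_def algebra_simps power2_eq_square)
  qed
  then have "D\<^sup>2 + 4 * a * b \<le> (D + 2 * min a b)\<^sup>2"
    by (simp add: algebra_simps power2_eq_square)
  then show ?thesis
    using ab by (auto simp: p_denominator_def jstar_denominator_def a_def b_def D_def
        intro!: real_le_lsqrt)
qed

lemma between_jstar_and_p_metric:
  fixes x y :: "'a::euclidean_space"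
  assumes "norm x < 1" "norm y < 1"
    and "p_denominator x y \<le> E" "E \<le> jstar_denominator x y"
  shows "jstar_metric (ball 0 1) x y \<le> dist x y / E" "dist x y / E \<le> p_metric (ball 0 1) x y"
  using assms p_denominator_pos[OF assms(1,2)]
  by (auto simp: p_metric_unit_ball jstar_metric_unit_ball intro!: divide_left_mono)

lemma cInf_image_between:
  fixes f :: "'b \<Rightarrow> real"
  assumes "\<And>s. s \<in> S \<Longrightarrow> L \<le> f s" and "s \<in> S" "f s \<le> U"
  shows "L \<le> Inf (f ` S)" "Inf (f ` S) \<le> U"
proof -
  show "L \<le> Inf (f ` S)"
    using assms by (intro cInf_greatest) auto
  have "Inf (f ` S) \<le> f s"
    using assms by (intro cInf_lower bdd_belowI[of _ L]) auto
  with assms show "Inf (f ` S) \<le> U"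
    by linarith
qed

text \<open>Reflect \<open>v\<close> in the hyperplane orthogonal to \<open>z\<close> and apply Cauchy-Schwarz.\<close>
lemma norm_mult_norm_plus_inner_ge:
  fixes u v z :: "'a::euclidean_space"
  assumes "norm z = 1"
  shows "2 * (u \<bullet> z) * (v \<bullet> z) \<le> norm u * norm v + u \<bullet> v"
proof -
  have "z \<bullet> z = 1"
    using assms by (simp add: dot_square_norm)
  then have "((2 * (v \<bullet> z)) *\<^sub>R z - v) \<bullet> ((2 * (v \<bullet> z)) *\<^sub>R z - v) = v \<bullet> v"
    by (simp add: inner_diff_left inner_diff_right inner_commute power2_eq_square)
  then have "norm ((2 * (v \<bullet> z)) *\<^sub>R z - v) = norm v"
    by (simp add: norm_eq_sqrt_inner)
  then have "u \<bullet> ((2 * (v \<bullet> z)) *\<^sub>R z - v) \<le> norm u * norm v"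
    by (metis norm_cauchy_schwarz)
  then show ?thesis
    by (simp add: algebra_simps)
qed

lemma p_denominator_le_path_through_sphere:
  fixes x y z :: "'a::euclidean_space"
  assumes "norm x < 1" "norm y < 1" "norm z = 1"
  shows "p_denominator x y \<le> dist x z + dist z y"
proof -
  define u v where "u = z - x" and "v = z - y"
  have "1 - norm x \<le> u \<bullet> z" "1 - norm y \<le> v \<bullet> z"
    using assms norm_cauchy_schwarz[of x z] norm_cauchy_schwarz[of y z]
    by (auto simp: u_def v_def inner_diff_left dot_square_norm)
  then have "2 * (1 - norm x) * (1 - norm y) \<le> 2 * (u \<bullet> z) * (v \<bullet> z)"
    using assms by (simp add: mult_mono)
  also have "\<dots> \<le> norm u * norm v + u \<bullet> v"
    by (rule norm_mult_norm_plus_inner_ge[OF assms(3)])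
  finally have uv: "2 * (1 - norm x) * (1 - norm y) \<le> norm u * norm v + u \<bullet> v" .
  have "x - y = v - u"
    by (simp add: u_def v_def)
  then have "(dist x y)\<^sup>2 = (norm u)\<^sup>2 + (norm v)\<^sup>2 - 2 * (u \<bullet> v)"
    by (simp add: dist_norm power2_norm_eq_inner inner_diff_left inner_diff_right inner_commute)
  with uv have "(dist x y)\<^sup>2 + 4 * (1 - norm x) * (1 - norm y) \<le> (norm u + norm v)\<^sup>2"
    by (simp add: power2_sum algebra_simps)
  then show ?thesis
    by (simp add: p_denominator_def u_def v_def dist_norm norm_minus_commute real_le_lsqrt)
qed

lemma s_metric_unit_ball_between:
  fixes x y :: "'a::euclidean_space"
  assumes x: "norm x < 1" and y: "norm y < 1"
  shows "jstar_metric (ball 0 1) x y \<le> s_metric (ball 0 1) x y"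
    and "s_metric (ball 0 1) x y \<le> p_metric (ball 0 1) x y"
proof -
  define I where "I = Inf ((\<lambda>z. dist x z + dist z y) ` sphere 0 1)"
  obtain m :: 'a where m: "norm m = 1" "y = norm y *\<^sub>R m"
    using exists_unit_direction by blast
  obtain n :: 'a where n: "norm n = 1" "x = norm x *\<^sub>R n"
    using exists_unit_direction by blast
  have "dist x m + dist m y \<le> dist x y + 2 * (1 - norm y)"
    using dist_triangle[of x m y] dist_unit_direction[OF m] y by (simp add: dist_commute)
  then have I_y: "p_denominator x y \<le> I" "I \<le> dist x y + 2 * (1 - norm y)"
    using cInf_image_between[of "sphere 0 1" _ "\<lambda>z. dist x z + dist z y" m]
      p_denominator_le_path_through_sphere[OF x y] m by (auto simp: I_def)
  have "dist x n + dist n y \<le> dist x y + 2 * (1 - norm x)"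
    using dist_triangle[of n y x] dist_unit_direction[OF n] x by (simp add: dist_commute)
  then have "I \<le> dist x y + 2 * (1 - norm x)"
    using cInf_image_between(2)[of "sphere 0 1" 0 "\<lambda>z. dist x z + dist z y" n] n
    by (auto simp: I_def)
  with I_y have "p_denominator x y \<le> I" "I \<le> jstar_denominator x y"
    by (auto simp: jstar_denominator_def min_def)
  then show "jstar_metric (ball 0 1) x y \<le> s_metric (ball 0 1) x y"
    "s_metric (ball 0 1) x y \<le> p_metric (ball 0 1) x y"
    using between_jstar_and_p_metric[OF x y] by (auto simp: s_metric_def I_def)
qed

lemma w_refl_set_unit_ball_memD:
  fixes y u :: "'a::euclidean_space"
  assumes y: "norm y < 1" and u: "u \<in> w_refl_set (ball 0 1) y"
  obtains m where "norm m = 1" "y = norm y *\<^sub>R m" "u = 2 *\<^sub>R m - y"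
proof -
  define m where "m = (1/2) *\<^sub>R (y + u)"
  have m: "norm m = 1" and "dist y u = 2 * (1 - norm y)"
    using u y by (auto simp: w_refl_set_def m_def bdist_unit_ball)
  moreover have mu: "u = 2 *\<^sub>R m - y"
    by (simp add: m_def algebra_simps scaleR_2)
  moreover have "y - u = 2 *\<^sub>R (y - m)"
    by (simp add: mu scaleR_2 algebra_simps)
  ultimately have my: "norm (m - y) = 1 - norm y"
    by (simp add: dist_norm norm_minus_commute)
  then have "norm (y + (m - y)) = norm y + norm (m - y)"
    using m by simp
  then have "norm y *\<^sub>R (m - y) = norm (m - y) *\<^sub>R y"
    by (rule norm_triangle_eq[THEN iffD1])
  then have "y = norm y *\<^sub>R m"
    using my by (simp add: algebra_simps)
  with m mu that show ?thesis
    by blast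
qed

lemma w_refl_set_unit_ball_memI:
  fixes y m :: "'a::euclidean_space"
  assumes "norm y < 1" "norm m = 1" "y = norm y *\<^sub>R m"
  shows "2 *\<^sub>R m - y \<in> w_refl_set (ball 0 1) y"
proof -
  have "y - (2 *\<^sub>R m - y) = 2 *\<^sub>R (y - m)"
    by (simp add: scaleR_2 algebra_simps)
  then have "dist y (2 *\<^sub>R m - y) = 2 * (1 - norm y)"
    using assms dist_unit_direction[of m y] by (simp add: dist_norm)
  moreover have "(1/2) *\<^sub>R (y + (2 *\<^sub>R m - y)) = m"
    by simp
  ultimately show ?thesis
    using assms by (simp add: w_refl_set_def bdist_unit_ball)
qed

lemma p_denominator_le_dist_w_refl:
  fixes x y u :: "'a::euclidean_space"
  assumes x: "norm x < 1" and y: "norm y < 1" and u: "u \<in> w_refl_set (ball 0 1) y"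
  shows "p_denominator x y \<le> dist x u"
proof -
  obtain m where m: "norm m = 1" "y = norm y *\<^sub>R m" and u: "u = 2 *\<^sub>R m - y"
    using w_refl_set_unit_ball_memD[OF y u] .
  have ym: "y \<bullet> m = norm y"
    using m by (metis inner_scaleR_left dot_square_norm mult.right_neutral power_one)
  have "m - y = (1 - norm y) *\<^sub>R m"
    using m by (metis scaleR_diff_left scaleR_one)
  moreover have "x - u = (x - y) - 2 *\<^sub>R (m - y)"
    by (simp add: u scaleR_2 algebra_simps)
  ultimately have "x - u = (x - y) + (- 2 * (1 - norm y)) *\<^sub>R m"
    by (metis add_uminus_conv_diff scaleR_minus_left scaleR_scaleR)
  then have "(dist x u)\<^sup>2 = (norm ((x - y) + (- 2 * (1 - norm y)) *\<^sub>R m))\<^sup>2"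
    by (simp only: dist_norm)
  also have "\<dots> = (dist x y)\<^sup>2 + 4 * (1 - norm y) * (1 - x \<bullet> m)"
    unfolding norm_add_scaleR_square using m ym
    by (simp add: dist_norm inner_commute algebra_simps power2_eq_square)
  finally have "(dist x u)\<^sup>2 = (dist x y)\<^sup>2 + 4 * (1 - norm y) * (1 - x \<bullet> m)" .
  moreover have "(1 - norm y) * (1 - norm x) \<le> (1 - norm y) * (1 - x \<bullet> m)"
    using norm_cauchy_schwarz[of x m] m y by (intro mult_left_mono) auto
  ultimately have "(dist x y)\<^sup>2 + 4 * (1 - norm x) * (1 - norm y) \<le> (dist x u)\<^sup>2"
    using y by (simp add: algebra_simps mult_left_mono)
  then show ?thesis
    by (simp add: p_denominator_def real_le_lsqrt)
qed

lemma w_refl_infimum_between: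
  fixes x y :: "'a::euclidean_space"
  assumes x: "norm x < 1" and y: "norm y < 1"
  shows "p_denominator x y \<le> Inf (dist x ` w_refl_set (ball 0 1) y)"
    and "Inf (dist x ` w_refl_set (ball 0 1) y) \<le> dist x y + 2 * (1 - norm y)"
proof -
  obtain m :: 'a where m: "norm m = 1" "y = norm y *\<^sub>R m"
    using exists_unit_direction by blast
  have "y - (2 *\<^sub>R m - y) = 2 *\<^sub>R (y - m)"
    by (simp add: scaleR_2 algebra_simps)
  then have "dist y (2 *\<^sub>R m - y) = 2 * (1 - norm y)"
    using dist_unit_direction[OF m] y by (simp add: dist_norm)
  then have "dist x (2 *\<^sub>R m - y) \<le> dist x y + 2 * (1 - norm y)"
    using dist_triangle[of x "2 *\<^sub>R m - y" y] by simp
  then show "p_denominator x y \<le> Inf (dist x ` w_refl_set (ball 0 1) y)"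
    "Inf (dist x ` w_refl_set (ball 0 1) y) \<le> dist x y + 2 * (1 - norm y)"
    using cInf_image_between[OF p_denominator_le_dist_w_refl[OF x y]
        w_refl_set_unit_ball_memI[OF y m]] by auto
qed

lemma p_denominator_commute: "p_denominator x y = p_denominator y x"
  by (simp add: p_denominator_def dist_commute algebra_simps)

lemma w_metric_unit_ball_between:
  fixes x y :: "'a::euclidean_space"
  assumes x: "norm x < 1" and y: "norm y < 1"
  shows "jstar_metric (ball 0 1) x y \<le> w_metric (ball 0 1) x y"
    and "w_metric (ball 0 1) x y \<le> p_metric (ball 0 1) x y"
proof -
  define I where "I = min (Inf (dist x ` w_refl_set (ball 0 1) y)) (Inf (dist y ` w_refl_set (ball 0 1) x))"
  have "p_denominator x y \<le> I" "I \<le> jstar_denominator x y"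
    using w_refl_infimum_between[OF x y] w_refl_infimum_between[OF y x]
    by (auto simp: I_def jstar_denominator_def p_denominator_commute[of y] dist_commute min_def)
  then show "jstar_metric (ball 0 1) x y \<le> w_metric (ball 0 1) x y"
    "w_metric (ball 0 1) x y \<le> p_metric (ball 0 1) x y"
    using between_jstar_and_p_metric[OF x y] by (auto simp: w_metric_def I_def)
qed

lemma ball_metric_between:
  fixes x y :: "'a::euclidean_space"
  assumes "d \<in> {jstar_metric, w_metric, s_metric, p_metric}" "norm x < 1" "norm y < 1"
  shows "jstar_metric (ball 0 1) x y \<le> d (ball 0 1) x y" "d (ball 0 1) x y \<le> p_metric (ball 0 1) x y"
proof -
  have "jstar_metric (ball 0 1) x y \<le> p_metric (ball 0 1) x y"
    using between_jstar_and_p_metric[OF assms(2,3) order.refl p_denominator_le_jstar_denominator]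
      assms by (simp add: p_metric_unit_ball)
  then show "jstar_metric (ball 0 1) x y \<le> d (ball 0 1) x y" "d (ball 0 1) x y \<le> p_metric (ball 0 1) x y"
    using assms s_metric_unit_ball_between w_metric_unit_ball_between by auto
qed

text \<open>\<open>tanh (\<rho>/2)\<close> of the hyperbolic distance \<open>\<rho>\<close> of the unit ball.\<close>
definition tanh_half_hdist :: "'a::euclidean_space \<Rightarrow> 'a \<Rightarrow> real" where
  "tanh_half_hdist x y = dist x y / sqrt ((dist x y)\<^sup>2 + (1 - (norm x)\<^sup>2) * (1 - (norm y)\<^sup>2))"

lemma one_minus_norm_square:
  "1 - (norm x)\<^sup>2 = (1 - norm x) * (2 - (1 - norm x))"
  by (simp add: algebra_simps power2_eq_square)

lemma p_metric_le_tanh_half_hdist: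
  fixes x y :: "'a::euclidean_space"
  assumes x: "norm x < 1" and y: "norm y < 1"
  shows "p_metric (ball 0 1) x y \<le> tanh_half_hdist x y"
proof -
  have "0 \<le> 1 - (norm w)\<^sup>2" "1 - (norm w)\<^sup>2 \<le> 2 * (1 - norm w)" if "norm w < 1" for w :: 'a
  proof -
    have "0 \<le> (1 - norm w)\<^sup>2"
      by simp
    with that show "0 \<le> 1 - (norm w)\<^sup>2" "1 - (norm w)\<^sup>2 \<le> 2 * (1 - norm w)"
      by (simp_all add: power2_eq_square algebra_simps mult_le_one)
  qed
  then have "(1 - (norm x)\<^sup>2) * (1 - (norm y)\<^sup>2) \<le> (2 * (1 - norm x)) * (2 * (1 - norm y))"
    using x y by (intro mult_mono) auto
  also have "\<dots> = 4 * (1 - norm x) * (1 - norm y)"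
    by (simp add: algebra_simps)
  finally have "sqrt ((dist x y)\<^sup>2 + (1 - (norm x)\<^sup>2) * (1 - (norm y)\<^sup>2)) \<le> p_denominator x y"
    by (simp add: p_denominator_def)
  moreover have "0 < (1 - (norm x)\<^sup>2) * (1 - (norm y)\<^sup>2)"
    unfolding one_minus_norm_square using x y by (intro mult_pos_pos) (auto intro: add_pos_nonneg)
  ultimately show ?thesis
    unfolding p_metric_unit_ball[OF x y] tanh_half_hdist_def using p_denominator_pos[OF x y]
    by (intro divide_left_mono) (auto intro!: mult_pos_pos add_nonneg_pos)
qed

lemma tanh_half_hdist_le_jstar:
  fixes x y :: "'a::euclidean_space"
  assumes x: "norm x < 1" and y: "norm y < 1"
  defines "j \<equiv> jstar_metric (ball 0 1) x y"
  shows "tanh_half_hdist x y \<le> 2 * j / (1 + j\<^sup>2)"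
proof -
  define m where "m = min (1 - norm x) (1 - norm y)"
  have m: "0 < m" "m \<le> 1 - norm x" "m \<le> 1 - norm y" "m \<le> 1"
    using x y norm_ge_zero[of x] unfolding m_def by linarith+
  have hx: "m * (2 - m) \<le> (1 - norm x) * (2 - (1 - norm x))"
    and hy: "m * (2 - m) \<le> (1 - norm y) * (2 - (1 - norm y))"
    by (rule mult_two_minus_mono; use m norm_ge_zero[of x] norm_ge_zero[of y] in linarith)+
  have "(m * (2 - m))\<^sup>2 = (m * (2 - m)) * (m * (2 - m))"
    by (simp add: power2_eq_square)
  also have "\<dots> \<le> ((1 - norm x) * (2 - (1 - norm x))) * ((1 - norm y) * (2 - (1 - norm y)))"
    by (rule mult_mono[OF hx hy]) (use m x in \<open>auto intro!: mult_nonneg_nonneg\<close>)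
  also have "\<dots> = (1 - (norm x)\<^sup>2) * (1 - (norm y)\<^sup>2)"
    by (simp only: one_minus_norm_square)
  finally have "(m * (2 - m))\<^sup>2 \<le> (1 - (norm x)\<^sup>2) * (1 - (norm y)\<^sup>2)" .
  then have le: "sqrt ((dist x y)\<^sup>2 + (m * (2 - m))\<^sup>2)
      \<le> sqrt ((dist x y)\<^sup>2 + (1 - (norm x)\<^sup>2) * (1 - (norm y)\<^sup>2))"
    by simp
  have pos: "0 < sqrt ((dist x y)\<^sup>2 + (m * (2 - m))\<^sup>2)"
    using m by (intro real_sqrt_gt_zero add_nonneg_pos) auto
  have "tanh_half_hdist x y \<le> dist x y / sqrt ((dist x y)\<^sup>2 + (m * (2 - m))\<^sup>2)"
    unfolding tanh_half_hdist_def using le pos order.strict_trans2[OF pos le]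
    by (intro divide_left_mono mult_pos_pos) auto
  also have "\<dots> \<le> 2 * j / (1 + j\<^sup>2)"
  proof -
    have "dist x y + 2 * m \<le> 2"
      using m norm_triangle_ineq4[of x y] by (simp add: dist_norm)
    from ratio_le_double_jstar[OF m(1) zero_le_dist this] show ?thesis
      unfolding j_def jstar_metric_unit_ball[OF x y] jstar_denominator_def m_def[symmetric] .
  qed
  finally show ?thesis .
qed

lemma ball_metric_le_tanh_half_hdist:
  fixes x y :: "'a::euclidean_space"
  assumes "d \<in> {jstar_metric, w_metric, s_metric, p_metric}" "norm x < 1" "norm y < 1"
  shows "d (ball 0 1) x y \<le> tanh_half_hdist x y"
  using ball_metric_between(2)[OF assms] p_metric_le_tanh_half_hdist[OF assms(2,3)] by simp

lemma tanh_half_hdist_le_ball_metric: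
  fixes x y :: "'a::euclidean_space"
  assumes d: "d \<in> {jstar_metric, w_metric, s_metric, p_metric}" and x: "norm x < 1" and y: "norm y < 1"
  shows "tanh_half_hdist x y \<le> 2 * d (ball 0 1) x y / (1 + (d (ball 0 1) x y)\<^sup>2)"
proof -
  have "p_metric (ball 0 1) x y \<le> 1"
    using x y p_denominator_pos[OF x y]
    by (auto simp: p_metric_unit_ball p_denominator_def intro!: real_le_rsqrt)
  then show ?thesis
    using tanh_half_hdist_le_jstar[OF x y] ball_metric_between[OF d x y] jstar_metric_unit_ball_nonneg[OF x y]
      two_div_one_plus_sq_mono[of "jstar_metric (ball 0 1) x y" "d (ball 0 1) x y"] by linarith
qed

section \<open>Moebius transformations in the Lorentz model\<close>

text \<open>Points of the extended space are lifted to the light cone of the Lorentzian form below: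
  \<open>x \<mapsto> (1, x, |x|\<^sup>2)\<close> and \<open>\<infinity> \<mapsto> (0, 0, 1)\<close>, so that the form of two lifted points is
  \<open>-|x - y|\<^sup>2 / 2\<close>. Every Moebius map then acts projectively through a linear map that
  scales this form.\<close>

definition cone_point :: "'a::euclidean_space option \<Rightarrow> real \<times> 'a \<times> real" where
  "cone_point p = (case p of None \<Rightarrow> (0, 0, 1) | Some x \<Rightarrow> (1, x, (norm x)\<^sup>2))"

definition lorentz_form :: "real \<times> 'a::euclidean_space \<times> real \<Rightarrow> real \<times> 'a \<times> real \<Rightarrow> real" where
  "lorentz_form u u' = fst (snd u) \<bullet> fst (snd u') - (fst u * snd (snd u') + snd (snd u) * fst u') / 2"

definition lorentz_lift ::
    "('a::euclidean_space option \<Rightarrow> 'a option) \<Rightarrow> (real \<times> 'a \<times> real \<Rightarrow> real \<times> 'a \<times> real) \<Rightarrow> real \<Rightarrow> bool"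
  where "lorentz_lift f M \<rho> \<longleftrightarrow> linear M \<and> 0 < \<rho> \<and>
    (\<forall>p. \<exists>k>0. M (cone_point p) = k *\<^sub>R cone_point (f p)) \<and>
    (\<forall>u u'. lorentz_form (M u) (M u') = \<rho> * lorentz_form u u')"

lemma lorentz_form_cone_point: "lorentz_form (cone_point (Some x)) (cone_point (Some y)) = - (dist x y)\<^sup>2 / 2"
  by (simp add: lorentz_form_def cone_point_def dist_norm power2_norm_eq_inner inner_diff_left
      inner_diff_right inner_commute field_simps)

lemma lorentz_form_diff_left: "lorentz_form (u - v) w = lorentz_form u w - lorentz_form v w"
  by (simp add: lorentz_form_def inner_diff_left field_simps)

lemma lorentz_form_scaleR_left: "lorentz_form (k *\<^sub>R u) w = k * lorentz_form u w"
  by (simp add: lorentz_form_def algebra_simps)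

lemma lorentz_form_scaleR_right: "lorentz_form w (k *\<^sub>R u) = k * lorentz_form w u"
  by (simp add: lorentz_form_def algebra_simps)

lemma lorentz_form_nondegenerate_on_cone:
  assumes "\<And>q. lorentz_form w (cone_point q) = 0"
  shows "w = (0 :: real \<times> 'a::euclidean_space \<times> real)"
proof -
  obtain s v t where w: "w = (s, v, t)"
    by (cases w) auto
  have "s = 0"
    using assms[of None] by (simp add: w lorentz_form_def cone_point_def)
  moreover have "t = 0"
    using assms[of "Some 0"] by (simp add: w lorentz_form_def cone_point_def)
  moreover have "v \<bullet> v = 0"
    using assms[of "Some v"] calculation by (simp add: w lorentz_form_def cone_point_def)
  ultimately show ?thesis
    by (simp add: w zero_prod_def)
qed

definition lorentz_reflection :: "'a::euclidean_space \<Rightarrow> real \<Rightarrow> real \<times> 'a \<times> real \<Rightarrow> real \<times> 'a \<times> real" where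
  "lorentz_reflection a t u = (fst u, fst (snd u) - (2 * (a \<bullet> fst (snd u) - t * fst u) / (a \<bullet> a)) *\<^sub>R a,
      snd (snd u) - 4 * t * (a \<bullet> fst (snd u) - t * fst u) / (a \<bullet> a))"

definition lorentz_inversion :: "'a::euclidean_space \<Rightarrow> real \<Rightarrow> real \<times> 'a \<times> real \<Rightarrow> real \<times> 'a \<times> real" where
  "lorentz_inversion c r u =
    (let s = fst u; v = fst (snd u); w = snd (snd u); e = w - 2 * (c \<bullet> v) + (c \<bullet> c) * s in
     (e, e *\<^sub>R c + r\<^sup>2 *\<^sub>R (v - s *\<^sub>R c), (c \<bullet> c) * e + 2 * r\<^sup>2 * (c \<bullet> (v - s *\<^sub>R c)) + r ^ 4 * s))"

lemma linear_lorentz_reflection: "linear (lorentz_reflection a t)"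
  by (rule linearI) (auto simp: lorentz_reflection_def prod_eq_iff algebra_simps
      add_divide_distrib diff_divide_distrib)

lemma linear_lorentz_inversion: "linear (lorentz_inversion c r)"
  by (rule linearI) (auto simp: lorentz_inversion_def Let_def prod_eq_iff algebra_simps)

lemma lorentz_form_lorentz_reflection:
  assumes "a \<noteq> 0"
  shows "lorentz_form (lorentz_reflection a t u) (lorentz_reflection a t u') = lorentz_form u u'"
proof -
  obtain s v w where u: "u = (s, v, w)"
    by (cases u) auto
  obtain s' v' w' where u': "u' = (s', v', w')"
    by (cases u') auto
  show ?thesis
    unfolding u u' lorentz_form_def lorentz_reflection_def using assms
    by (simp add: inner_diff_left inner_diff_right inner_commute field_simps)
qed

lemma lorentz_form_lorentz_inversion:
  "lorentz_form (lorentz_inversion c r u) (lorentz_inversion c r u') = r ^ 4 * lorentz_form u u'"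
proof -
  obtain s v w where u: "u = (s, v, w)"
    by (cases u) auto
  obtain s' v' w' where u': "u' = (s', v', w')"
    by (cases u') auto
  show ?thesis
    unfolding u u' lorentz_form_def lorentz_inversion_def Let_def
    by (simp add: inner_diff_left inner_diff_right inner_add_left inner_add_right inner_commute
        field_simps)
qed

lemma lorentz_reflection_cone_point:
  assumes "a \<noteq> 0"
  shows "lorentz_reflection a t (cone_point p) = cone_point (hyperplane_reflection a t p)"
proof (cases p)
  case (Some x)
  have "(norm (x - (2 * (a \<bullet> x - t) / (a \<bullet> a)) *\<^sub>R a))\<^sup>2 = (norm x)\<^sup>2 - 4 * t * (a \<bullet> x - t) / (a \<bullet> a)"
    unfolding power2_norm_eq_inner using assms
    by (simp add: inner_diff_left inner_diff_right inner_commute field_simps)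
  with Some show ?thesis
    by (simp add: lorentz_reflection_def cone_point_def hyperplane_reflection_def)
qed (simp add: lorentz_reflection_def cone_point_def hyperplane_reflection_def)

lemma lorentz_inversion_cone_point:
  assumes "r > 0"
  shows "\<exists>k>0. lorentz_inversion c r (cone_point p) = k *\<^sub>R cone_point (sphere_inversion c r p)"
proof (cases p)
  case None
  then show ?thesis
    by (intro exI[of _ 1]) (simp add: lorentz_inversion_def cone_point_def sphere_inversion_def dot_square_norm)
next
  case (Some x)
  show ?thesis
  proof (cases "x = c")
    case True
    with Some assms show ?thesis
      by (intro exI[of _ "r ^ 4"]) (simp add: lorentz_inversion_def cone_point_def sphere_inversion_def dot_square_norm)
  next
    case False
    define k where "k = (norm (x - c))\<^sup>2"
    have k: "k > 0"
      using False by (simp add: k_def)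
    have e: "(norm x)\<^sup>2 - 2 * (c \<bullet> x) + (c \<bullet> c) = k"
      unfolding k_def power2_norm_eq_inner by (simp add: inner_diff_left inner_diff_right inner_commute)
    define y where "y = c + (r\<^sup>2 / k) *\<^sub>R (x - c)"
    have y: "sphere_inversion c r (Some x) = Some y"
      using False by (simp add: sphere_inversion_def y_def k_def)
    have "k * (norm y)\<^sup>2 = (c \<bullet> c) * k + 2 * r\<^sup>2 * (c \<bullet> (x - c)) + r ^ 4"
      unfolding y_def norm_add_scaleR_square k_def[symmetric] using k
      by (simp add: dot_square_norm field_simps power2_eq_square power4_eq_xxxx)
    moreover have "k *\<^sub>R y = k *\<^sub>R c + r\<^sup>2 *\<^sub>R (x - c)"
      using k by (simp add: y_def scaleR_add_right)
    moreover have "lorentz_inversion c r (cone_point (Some x))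
        = (k, k *\<^sub>R c + r\<^sup>2 *\<^sub>R (x - c), (c \<bullet> c) * k + 2 * r\<^sup>2 * (c \<bullet> (x - c)) + r ^ 4)"
      by (simp add: lorentz_inversion_def cone_point_def Let_def e)
    ultimately show ?thesis
      using Some y k by (intro exI[of _ k]) (simp add: cone_point_def)
  qed
qed

lemma hyperplane_reflection_involution:
  assumes "a \<noteq> 0"
  shows "hyperplane_reflection a t (hyperplane_reflection a t p) = p"
proof (cases p)
  case (Some x)
  define y where "y = x - (2 * (a \<bullet> x - t) / (a \<bullet> a)) *\<^sub>R a"
  have "a \<bullet> y - t = - (a \<bullet> x - t)"
    using assms by (simp add: y_def inner_diff_right)
  then have "2 * (a \<bullet> y - t) / (a \<bullet> a) = - (2 * (a \<bullet> x - t) / (a \<bullet> a))"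
    by (simp only: mult_minus_right minus_divide_left)
  then have "y - (2 * (a \<bullet> y - t) / (a \<bullet> a)) *\<^sub>R a = x"
    by (simp add: y_def)
  with Some show ?thesis
    by (simp add: hyperplane_reflection_def y_def)
qed (simp add: hyperplane_reflection_def)

lemma sphere_inversion_involution:
  assumes "r > 0"
  shows "sphere_inversion c r (sphere_inversion c r p) = p"
proof (cases p)
  case (Some x)
  show ?thesis
  proof (cases "x = c")
    case False
    define k where "k = (norm (x - c))\<^sup>2"
    have k: "k > 0"
      using False by (simp add: k_def)
    have "(norm ((r\<^sup>2 / k) *\<^sub>R (x - c)))\<^sup>2 = r ^ 4 / k"
      using k by (simp add: k_def power_mult_distrib power_divide power2_eq_square power4_eq_xxxx)
    then have "c + (r\<^sup>2 / (norm ((r\<^sup>2 / k) *\<^sub>R (x - c)))\<^sup>2) *\<^sub>R ((r\<^sup>2 / k) *\<^sub>R (x - c)) = x"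
      using k assms by (simp add: power4_eq_xxxx power2_eq_square)
    with Some False k assms show ?thesis
      by (simp add: sphere_inversion_def k_def)
  qed (simp add: Some sphere_inversion_def)
qed (simp add: sphere_inversion_def)

lemma bij_mobius: "f \<in> mobius \<Longrightarrow> bij f"
  by (induction rule: mobius.induct)
    (auto intro: involuntory_imp_bij hyperplane_reflection_involution sphere_inversion_involution
      bij_comp[unfolded comp_def])

lemma lorentz_liftD:
  assumes "lorentz_lift f M \<rho>"
  shows "linear M" "0 < \<rho>" "\<exists>k>0. M (cone_point p) = k *\<^sub>R cone_point (f p)"
    "lorentz_form (M u) (M u') = \<rho> * lorentz_form u u'"
  using assms unfolding lorentz_lift_def by blast+

lemma lorentz_lift_comp:
  assumes "lorentz_lift f Mf \<rho>f" "lorentz_lift g Mg \<rho>g"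
  shows "lorentz_lift (f \<circ> g) (Mf \<circ> Mg) (\<rho>f * \<rho>g)"
  unfolding lorentz_lift_def
proof (intro conjI allI)
  show "linear (Mf \<circ> Mg)" "0 < \<rho>f * \<rho>g"
    using lorentz_liftD[OF assms(1)] lorentz_liftD[OF assms(2)] by (auto simp: linear_compose)
  show "lorentz_form ((Mf \<circ> Mg) u) ((Mf \<circ> Mg) u') = \<rho>f * \<rho>g * lorentz_form u u'" for u u'
    using lorentz_liftD(4)[OF assms(1)] lorentz_liftD(4)[OF assms(2)] by simp
  fix p
  obtain k1 where k1: "k1 > 0" "Mg (cone_point p) = k1 *\<^sub>R cone_point (g p)"
    using lorentz_liftD(3)[OF assms(2)] by blast
  obtain k2 where k2: "k2 > 0" "Mf (cone_point (g p)) = k2 *\<^sub>R cone_point (f (g p))"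
    using lorentz_liftD(3)[OF assms(1)] by blast
  have "(Mf \<circ> Mg) (cone_point p) = (k1 * k2) *\<^sub>R cone_point ((f \<circ> g) p)"
    using k1 k2 linear_scale[OF lorentz_liftD(1)[OF assms(1)]] by simp
  with k1 k2 show "\<exists>k>0. (Mf \<circ> Mg) (cone_point p) = k *\<^sub>R cone_point ((f \<circ> g) p)"
    by (intro exI[of _ "k1 * k2"]) auto
qed

lemma mobius_lorentz_lift: "f \<in> mobius \<Longrightarrow> \<exists>M \<rho>. lorentz_lift f M \<rho>"
proof (induction rule: mobius.induct)
  case (reflection a t)
  then have "lorentz_lift (hyperplane_reflection a t) (lorentz_reflection a t) 1"
    by (auto simp: lorentz_lift_def linear_lorentz_reflection lorentz_form_lorentz_reflection
        lorentz_reflection_cone_point intro: exI[of _ 1])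
  then show ?case
    by blast
next
  case (inversion r c)
  then have "lorentz_lift (sphere_inversion c r) (lorentz_inversion c r) (r ^ 4)"
    by (simp add: lorentz_lift_def linear_lorentz_inversion lorentz_form_lorentz_inversion
        lorentz_inversion_cone_point)
  then show ?case
    by blast
next
  case (comp f g)
  then show ?case
    by (blast intro: lorentz_lift_comp)
qed

section \<open>Moebius self-maps of the unit ball\<close>

lemma quadratic_negative_exactly_on_ball:
  fixes l :: "'a::euclidean_space \<Rightarrow> real"
  assumes l: "linear l" and neg: "\<And>z. \<gamma> + l z + \<alpha> * (norm z)\<^sup>2 < 0 \<longleftrightarrow> norm z < 1"
  shows "\<gamma> + l z + \<alpha> * (norm z)\<^sup>2 = \<alpha> * ((norm z)\<^sup>2 - 1)" and "0 < \<alpha>"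
proof -
  define F where "F z = \<gamma> + l z + \<alpha> * (norm z)\<^sup>2" for z
  have "continuous_on (closure (ball 0 1)) l"
    using l by (simp add: linear_continuous_on linear_conv_bounded_linear)
  then have "continuous_on (closure (ball 0 1)) F"
    unfolding F_def by (intro continuous_intros)
  then have "F u \<le> 0" if "norm u = 1" for u
  proof (rule continuous_le_on_closure)
    show "u \<in> closure (ball 0 1)"
      using that by simp
    show "F z \<le> 0" if "z \<in> ball 0 1" for z
      using neg[of z] that by (simp add: F_def)
  qed
  moreover have "0 \<le> F u" if "norm u = 1" for u
    using that neg[of u] by (simp add: F_def)
  ultimately have sphere: "\<gamma> + l u + \<alpha> = 0" if "norm u = 1" for u
    using that by (force simp: F_def)
  obtain e :: 'a where "e \<in> Basis"
    using nonempty_Basis by blast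
  then have "\<gamma> + l e + \<alpha> = 0" "\<gamma> - l e + \<alpha> = 0"
    using sphere[of e] sphere[of "- e"] linear_neg[OF l, of e] by auto
  then have \<gamma>: "\<gamma> = - \<alpha>"
    by simp
  have "l z = 0"
  proof (cases "z = 0")
    case False
    then have "l (sgn z) = 0"
      using sphere[of "sgn z"] \<gamma> by (simp add: norm_sgn)
    then show ?thesis
      using linear_scale[OF l, of "norm z" "sgn z"] False by (simp add: sgn_div_norm)
  qed (simp add: linear_0[OF l])
  then show "\<gamma> + l z + \<alpha> * (norm z)\<^sup>2 = \<alpha> * ((norm z)\<^sup>2 - 1)"
    using \<gamma> by (simp add: algebra_simps)
  show "0 < \<alpha>"
    using neg[of 0] \<gamma> linear_0[OF l] by simp
qed

definition ball_side :: "real \<times> 'a::euclidean_space \<times> real \<Rightarrow> real" where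
  "ball_side u = snd (snd u) - fst u"

lemma ball_side_cone_point_Some: "ball_side (cone_point (Some x)) = (norm x)\<^sup>2 - 1"
  by (simp add: ball_side_def cone_point_def)

lemma ball_side_cone_point_neg_iff: "ball_side (cone_point p) < 0 \<longleftrightarrow> p \<in> Some ` ball 0 1"
proof (cases p)
  case (Some x)
  then show ?thesis
    using norm_power2_less_1_iff[of x] by (simp add: ball_side_cone_point_Some image_iff)
qed (simp add: ball_side_def cone_point_def)

lemma lorentz_form_ball_pole: "lorentz_form (2, 0, -2) u = - ball_side u"
proof -
  obtain s v t where "u = (s, v, t)"
    by (cases u) auto
  then show ?thesis
    by (simp add: lorentz_form_def ball_side_def field_simps)
qed

lemma linear_ball_side: "linear ball_side"
  by (rule linearI) (simp_all add: ball_side_def right_diff_distrib)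

lemma linear_cone_point_Some:
  assumes L: "linear L"
  shows "L (cone_point (Some z)) = L (1, 0, 0) + L (0, z, 0) + L (cone_point None) * (norm z)\<^sup>2"
proof -
  have "L (cone_point (Some z)) = L ((1, 0, 0) + (0, z, 0) + (norm z)\<^sup>2 *\<^sub>R cone_point None)"
    by (simp add: cone_point_def)
  then show ?thesis
    unfolding linear_add[OF L] linear_scale[OF L] by simp
qed

lemma ball_mobius_lift_sign:
  assumes h: "ball_mobius h" and M: "lorentz_lift h M \<rho>"
  shows "ball_side (M (cone_point p)) < 0 \<longleftrightarrow> p \<in> Some ` ball 0 1"
proof -
  have bij: "bij h" and img: "h ` (Some ` ball 0 1) = Some ` ball 0 1"
    using h bij_mobius by (auto simp: ball_mobius_def)
  obtain k where "k > 0" "M (cone_point p) = k *\<^sub>R cone_point (h p)"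
    using lorentz_liftD(3)[OF M] by blast
  then have "ball_side (M (cone_point p)) < 0 \<longleftrightarrow> ball_side (cone_point (h p)) < 0"
    by (simp add: linear_scale[OF linear_ball_side] mult_less_0_iff)
  also have "\<dots> \<longleftrightarrow> h p \<in> h ` (Some ` ball 0 1)"
    by (simp only: ball_side_cone_point_neg_iff img)
  also have "\<dots> \<longleftrightarrow> p \<in> Some ` ball 0 1"
    using bij by (simp add: bij_is_inj inj_image_mem_iff)
  finally show ?thesis .
qed

lemma ball_mobius_ball_side:
  fixes h :: "'a::euclidean_space option \<Rightarrow> 'a option"
  assumes h: "ball_mobius h" and M: "lorentz_lift h M \<rho>"
  obtains \<alpha> where "0 < \<alpha>" "\<And>p. ball_side (M (cone_point p)) = \<alpha> * ball_side (cone_point p)"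
proof -
  define L where "L = ball_side \<circ> M"
  have L: "linear L"
    unfolding L_def by (rule linear_compose[OF lorentz_liftD(1)[OF M] linear_ball_side])
  have l: "linear (\<lambda>z. L (0, z, 0))"
    by (rule linear_compose[OF _ L, unfolded comp_def]) (auto intro: linearI)
  have "L (1, 0, 0) + L (0, z, 0) + L (cone_point None) * (norm z)\<^sup>2 < 0 \<longleftrightarrow> norm z < 1" for z
    using ball_mobius_lift_sign[OF h M, of "Some z"] linear_cone_point_Some[OF L, of z]
    by (simp add: L_def image_iff)
  from quadratic_negative_exactly_on_ball[OF l this]
  have quadratic: "L (cone_point (Some z)) = L (cone_point None) * ((norm z)\<^sup>2 - 1)"
    and pos: "0 < L (cone_point None)" for z
    by (simp_all add: linear_cone_point_Some[OF L])
  show ?thesis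
  proof (rule that[OF pos])
    show "ball_side (M (cone_point p)) = L (cone_point None) * ball_side (cone_point p)" for p
    proof (cases p)
      case None
      then show ?thesis
        by (simp add: L_def ball_side_def cone_point_def)
    next
      case (Some z)
      then show ?thesis
        using quadratic by (simp add: L_def ball_side_cone_point_Some)
    qed
  qed
qed

lemma lorentz_lift_factor_eq_square:
  fixes h :: "'a::euclidean_space option \<Rightarrow> 'a option"
  assumes "surj h" and M: "lorentz_lift h M \<rho>" and "0 < \<alpha>"
    and side: "\<And>p. ball_side (M (cone_point p)) = \<alpha> * ball_side (cone_point p)"
  shows "\<rho> = \<alpha>\<^sup>2"
proof -
  define P :: "real \<times> 'a \<times> real" where "P = (2, 0, -2)"
  have pole: "lorentz_form P u = - ball_side u" for u
    by (simp add: P_def lorentz_form_ball_pole)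
  define w where "w = M P - (\<rho> / \<alpha>) *\<^sub>R P"
  have "lorentz_form w (M (cone_point p)) = 0" for p
    using \<open>0 < \<alpha>\<close> lorentz_liftD(4)[OF M, of P "cone_point p"]
    by (simp add: w_def lorentz_form_diff_left lorentz_form_scaleR_left pole side)
  then have "lorentz_form w (cone_point q) = 0" for q
  proof -
    obtain p where "h p = q"
      using \<open>surj h\<close> by (metis surj_f_inv_f)
    moreover obtain k where "k > 0" "M (cone_point p) = k *\<^sub>R cone_point (h p)"
      using lorentz_liftD(3)[OF M] by blast
    ultimately show ?thesis
      using \<open>lorentz_form w (M (cone_point p)) = 0\<close> by (simp add: lorentz_form_scaleR_right)
  qed
  then have "M P = (\<rho> / \<alpha>) *\<^sub>R P"
    using lorentz_form_nondegenerate_on_cone[of w] by (simp add: w_def)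
  then have "(\<rho> / \<alpha>) * (\<rho> / \<alpha>) * lorentz_form P P = \<rho> * lorentz_form P P"
    using lorentz_liftD(4)[OF M, of P P] by (simp add: lorentz_form_scaleR_left lorentz_form_scaleR_right)
  moreover have "lorentz_form P P = 4"
    by (simp add: P_def lorentz_form_def)
  ultimately show ?thesis
    using \<open>0 < \<alpha>\<close> lorentz_liftD(2)[OF M] by (simp add: field_simps power2_eq_square)
qed

lemma ball_mobius_invariant:
  fixes h :: "'a::euclidean_space option \<Rightarrow> 'a option"
  assumes h: "ball_mobius h"
    and hx: "h (Some x) = Some x'" and hy: "h (Some y) = Some y'"
  shows "(dist x' y')\<^sup>2 * ((1 - (norm x)\<^sup>2) * (1 - (norm y)\<^sup>2))
    = (dist x y)\<^sup>2 * ((1 - (norm x')\<^sup>2) * (1 - (norm y')\<^sup>2))"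
proof -
  obtain M \<rho> where M: "lorentz_lift h M \<rho>"
    using h mobius_lorentz_lift by (meson ball_mobius_def)
  obtain \<alpha> where \<alpha>: "0 < \<alpha>" and side: "\<And>p. ball_side (M (cone_point p)) = \<alpha> * ball_side (cone_point p)"
    using ball_mobius_ball_side[OF h M] by blast
  have "surj h"
    using h bij_mobius bij_is_surj by (meson ball_mobius_def)
  then have \<rho>: "\<rho> = \<alpha>\<^sup>2"
    using lorentz_lift_factor_eq_square[OF _ M \<alpha> side] by blast
  obtain kx where kx: "M (cone_point (Some x)) = kx *\<^sub>R cone_point (Some x')"
    using lorentz_liftD(3)[OF M, of "Some x"] hx by auto
  obtain ky where ky: "M (cone_point (Some y)) = ky *\<^sub>R cone_point (Some y')"
    using lorentz_liftD(3)[OF M, of "Some y"] hy by auto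
  have dist: "kx * ky * (dist x' y')\<^sup>2 = \<rho> * (dist x y)\<^sup>2"
    using lorentz_liftD(4)[OF M, of "cone_point (Some x)" "cone_point (Some y)"] kx ky
    by (simp add: lorentz_form_scaleR_left lorentz_form_scaleR_right lorentz_form_cone_point
        mult.left_commute)
  have sx: "kx * ((norm x')\<^sup>2 - 1) = \<alpha> * ((norm x)\<^sup>2 - 1)"
    using side[of "Some x"] kx by (simp add: linear_scale[OF linear_ball_side] ball_side_cone_point_Some)
  have sy: "ky * ((norm y')\<^sup>2 - 1) = \<alpha> * ((norm y)\<^sup>2 - 1)"
    using side[of "Some y"] ky by (simp add: linear_scale[OF linear_ball_side] ball_side_cone_point_Some)
  have "\<rho> * ((dist x' y')\<^sup>2 * ((1 - (norm x)\<^sup>2) * (1 - (norm y)\<^sup>2)))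
      = (dist x' y')\<^sup>2 * ((\<alpha> * ((norm x)\<^sup>2 - 1)) * (\<alpha> * ((norm y)\<^sup>2 - 1)))"
    by (simp add: \<rho> algebra_simps power2_eq_square)
  also have "\<dots> = (kx * ky * (dist x' y')\<^sup>2) * (((norm x')\<^sup>2 - 1) * ((norm y')\<^sup>2 - 1))"
    by (simp only: sx [symmetric] sy [symmetric] ac_simps)
  also have "\<dots> = \<rho> * ((dist x y)\<^sup>2 * ((1 - (norm x')\<^sup>2) * (1 - (norm y')\<^sup>2)))"
    by (simp only: dist) (simp add: algebra_simps)
  finally show ?thesis
    using \<alpha> \<rho> by simp
qed

lemma ball_mobius_Some:
  assumes "ball_mobius h" "norm x < 1"
  obtains x' where "h (Some x) = Some x'" "norm x' < 1"
proof -
  have "h (Some x) \<in> h ` Some ` ball 0 1"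
    using assms(2) by simp
  with assms(1) that show ?thesis
    by (auto simp: ball_mobius_def)
qed

lemma tanh_half_hdist_ball_mobius:
  fixes h :: "'a::euclidean_space option \<Rightarrow> 'a option"
  assumes h: "ball_mobius h" and x: "norm x < 1" and y: "norm y < 1"
    and hx: "h (Some x) = Some x'" and hy: "h (Some y) = Some y'"
  shows "tanh_half_hdist x' y' = tanh_half_hdist x y"
proof -
  have x': "norm x' < 1" and y': "norm y' < 1"
    using ball_mobius_Some[OF h x] ball_mobius_Some[OF h y] hx hy by auto
  define P P' where "P = (1 - (norm x)\<^sup>2) * (1 - (norm y)\<^sup>2)"
    and "P' = (1 - (norm x')\<^sup>2) * (1 - (norm y')\<^sup>2)"
  have pos: "0 < 1 - (norm w)\<^sup>2" if "norm w < 1" for w :: 'a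
    using that norm_power2_less_1_iff[of w] by simp
  have "0 < (dist x y)\<^sup>2 + P" "0 < (dist x' y')\<^sup>2 + P'"
    using pos[OF x] pos[OF y] pos[OF x'] pos[OF y'] by (simp_all add: P_def P'_def add_nonneg_pos)
  moreover have "(dist x' y')\<^sup>2 * ((dist x y)\<^sup>2 + P) = (dist x y)\<^sup>2 * ((dist x' y')\<^sup>2 + P')"
    using ball_mobius_invariant[OF h hx hy] by (simp add: P_def P'_def algebra_simps)
  ultimately have "(dist x' y')\<^sup>2 / ((dist x' y')\<^sup>2 + P') = (dist x y)\<^sup>2 / ((dist x y)\<^sup>2 + P)"
    by (simp add: frac_eq_eq)
  moreover have "tanh_half_hdist z w = sqrt ((dist z w)\<^sup>2 / ((dist z w)\<^sup>2 + (1 - (norm z)\<^sup>2) * (1 - (norm w)\<^sup>2)))"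
    for z w :: 'a
    by (simp add: tanh_half_hdist_def real_sqrt_divide)
  ultimately show ?thesis
    by (simp add: P_def P'_def)
qed

lemma ball_mobius_metric_le:
  fixes d :: "'a::euclidean_space set \<Rightarrow> 'a \<Rightarrow> 'a \<Rightarrow> real"
  assumes d: "d \<in> {jstar_metric, w_metric, s_metric, p_metric}"
    and h: "ball_mobius h" and x: "norm x < 1" and y: "norm y < 1"
  shows "d (ball 0 1) (the (h (Some x))) (the (h (Some y))) \<le> 2 * d (ball 0 1) x y / (1 + (d (ball 0 1) x y)\<^sup>2)"
proof -
  obtain x' y' where x': "h (Some x) = Some x'" "norm x' < 1" and y': "h (Some y) = Some y'" "norm y' < 1"
    using ball_mobius_Some[OF h x] ball_mobius_Some[OF h y] by metis
  have "d (ball 0 1) x' y' \<le> tanh_half_hdist x' y'"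
    using ball_metric_le_tanh_half_hdist[OF d x'(2) y'(2)] .
  also have "\<dots> = tanh_half_hdist x y"
    using tanh_half_hdist_ball_mobius[OF h x y x'(1) y'(1)] .
  also have "\<dots> \<le> 2 * d (ball 0 1) x y / (1 + (d (ball 0 1) x y)\<^sup>2)"
    using tanh_half_hdist_le_ball_metric[OF d x y] .
  finally show ?thesis
    by (simp add: x'(1) y'(1))
qed

section \<open>Sharpness of the factor two\<close>

lemma norm_sphere_inversion_orthogonal:
  fixes C z :: "'a::euclidean_space"
  assumes "(norm C)\<^sup>2 = 1 + r\<^sup>2" and "z \<noteq> C"
  defines "K \<equiv> (norm (z - C))\<^sup>2"
  shows "(norm (C + (r\<^sup>2 / K) *\<^sub>R (z - C)))\<^sup>2 - 1 = r\<^sup>2 * ((norm z)\<^sup>2 - 1) / K"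
proof -
  have K: "0 < K"
    using assms(2) by (simp add: K_def)
  have KC: "K + 2 * (C \<bullet> (z - C)) = (norm z)\<^sup>2 - (norm C)\<^sup>2"
    unfolding K_def power2_norm_eq_inner by (simp add: inner_diff_left inner_diff_right inner_commute)
  have "(norm (C + (r\<^sup>2 / K) *\<^sub>R (z - C)))\<^sup>2 - 1 = r\<^sup>2 * (K + 2 * (C \<bullet> (z - C)) + r\<^sup>2) / K"
    unfolding norm_add_scaleR_square K_def[symmetric] using K assms(1)
    by (simp add: field_simps power2_eq_square)
  also have "\<dots> = r\<^sup>2 * ((norm z)\<^sup>2 - 1) / K"
    using KC assms(1) by simp
  finally show ?thesis .
qed

lemma sphere_inversion_orthogonal_ball_mobius:
  fixes C :: "'a::euclidean_space"
  assumes r: "r > 0" and C: "(norm C)\<^sup>2 = 1 + r\<^sup>2"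
  shows "ball_mobius (sphere_inversion C r)"
proof -
  have "1 < norm C"
    using C r by (simp add: power2_less_imp_less[of 1 "norm C"])
  have into: "sphere_inversion C r ` Some ` ball 0 1 \<subseteq> Some ` ball 0 1"
  proof clarify
    fix z :: 'a
    assume "z \<in> ball 0 1"
    then have z: "norm z < 1" and zC: "z \<noteq> C"
      using \<open>1 < norm C\<close> by auto
    define K where "K = (norm (z - C))\<^sup>2"
    have "0 < K"
      using zC by (simp add: K_def)
    moreover have "(norm z)\<^sup>2 < 1"
      using z norm_power2_less_1_iff[of z] by simp
    ultimately have "r\<^sup>2 * ((norm z)\<^sup>2 - 1) / K < 0"
      using r by (simp add: mult_pos_neg divide_neg_pos)
    then have "(norm (C + (r\<^sup>2 / K) *\<^sub>R (z - C)))\<^sup>2 < 1"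
      using norm_sphere_inversion_orthogonal[OF C zC] by (simp add: K_def)
    then have "norm (C + (r\<^sup>2 / K) *\<^sub>R (z - C)) < 1"
      using norm_power2_less_1_iff by blast
    with zC show "sphere_inversion C r (Some z) \<in> Some ` ball 0 1"
      by (simp add: sphere_inversion_def K_def)
  qed
  moreover have "Some ` ball 0 1 \<subseteq> sphere_inversion C r ` Some ` ball 0 1"
  proof
    fix q :: "'a option"
    assume "q \<in> Some ` ball 0 1"
    then have "sphere_inversion C r q \<in> Some ` ball 0 1"
      using into by blast
    then show "q \<in> sphere_inversion C r ` Some ` ball 0 1"
      using sphere_inversion_involution[OF r, of C q] by (metis image_eqI)
  qed
  ultimately show ?thesis
    using r by (auto simp: ball_mobius_def intro: mobius.inversion)
qed

lemma sphere_inversion_on_line: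
  fixes e :: "'a::euclidean_space"
  assumes e: "norm e = 1" and s: "s \<noteq> k"
  shows "sphere_inversion (k *\<^sub>R e) r (Some (s *\<^sub>R e)) = Some ((k + r\<^sup>2 / (s - k)) *\<^sub>R e)"
proof -
  have "s *\<^sub>R e - k *\<^sub>R e = (s - k) *\<^sub>R e"
    by (simp add: scaleR_diff_left)
  moreover have "(norm ((s - k) *\<^sub>R e))\<^sup>2 = (s - k)\<^sup>2"
    using e by (simp add: power_mult_distrib)
  moreover have "r\<^sup>2 / (s - k)\<^sup>2 * (s - k) = r\<^sup>2 / (s - k)"
    using s by (simp add: power2_eq_square)
  moreover have "e \<noteq> 0"
    using e by auto
  ultimately show ?thesis
    using e s by (simp add: sphere_inversion_def scaleR_add_left)
qed

lemma jstar_metric_unit_ball_on_ray: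
  fixes e :: "'a::euclidean_space"
  assumes e: "norm e = 1" and "0 \<le> q" "q \<le> p" "p < 1"
  shows "jstar_metric (ball 0 1) (p *\<^sub>R e) (q *\<^sub>R e) = (p - q) / ((p - q) + 2 * (1 - p))"
proof -
  have "dist (p *\<^sub>R e) (q *\<^sub>R e) = p - q"
    using assms by (simp add: dist_norm flip: scaleR_diff_left)
  with assms show ?thesis
    by (simp add: jstar_metric_unit_ball jstar_denominator_def min_def)
qed

lemma p_metric_unit_ball_symmetric_le:
  fixes e :: "'a::euclidean_space"
  assumes e: "norm e = 1" and "0 \<le> \<eta>" "\<eta> < 1"
  shows "p_metric (ball 0 1) ((- \<eta>) *\<^sub>R e) (\<eta> *\<^sub>R e) \<le> \<eta> / (1 - \<eta>)"
proof -
  have "(- \<eta>) *\<^sub>R e - \<eta> *\<^sub>R e = (- \<eta> - \<eta>) *\<^sub>R e"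
    by (rule scaleR_diff_left[symmetric])
  then have "dist ((- \<eta>) *\<^sub>R e) (\<eta> *\<^sub>R e) = 2 * \<eta>"
    using assms by (simp add: dist_norm)
  then have "p_metric (ball 0 1) ((- \<eta>) *\<^sub>R e) (\<eta> *\<^sub>R e) = 2 * \<eta> / sqrt ((2 * \<eta>)\<^sup>2 + (2 * (1 - \<eta>))\<^sup>2)"
    using assms by (simp add: p_metric_unit_ball p_denominator_def power2_eq_square algebra_simps)
  also have "\<dots> \<le> 2 * \<eta> / (2 * (1 - \<eta>))"
    using assms by (intro divide_left_mono real_le_rsqrt mult_pos_pos) (auto intro: add_nonneg_pos)
  also have "\<dots> = \<eta> / (1 - \<eta>)"
    by (rule mult_divide_mult_cancel_left) simp
  finally show ?thesis .
qed

lemma ratio_bound_below_two: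
  fixes c \<eta> :: real
  assumes "0 \<le> c" "0 < \<eta>" "\<eta> \<le> 1/4" "8 * \<eta> \<le> 2 - c"
  shows "c * (\<eta> / (1 - \<eta>)) < \<eta> * (2 + \<eta>) / (1 + \<eta> + \<eta>\<^sup>2)"
proof -
  have pos: "0 < 1 + \<eta> + \<eta>\<^sup>2" "0 < 1 - \<eta>"
    using assms by (auto intro: add_pos_nonneg)
  have "c * (1 + \<eta> + \<eta>\<^sup>2) \<le> (2 - 8 * \<eta>) * (1 + \<eta> + \<eta>\<^sup>2)"
    using assms pos by (intro mult_right_mono) auto
  also have "\<dots> < (2 + \<eta>) * (1 - \<eta>)"
  proof -
    have "(2 + \<eta>) * (1 - \<eta>) - (2 - 8 * \<eta>) * (1 + \<eta> + \<eta>\<^sup>2) = \<eta> * (5 + 5 * \<eta> + 8 * \<eta>\<^sup>2)"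
      by (simp add: algebra_simps power2_eq_square)
    moreover have "0 < \<eta> * (5 + 5 * \<eta> + 8 * \<eta>\<^sup>2)"
      using assms by (intro mult_pos_pos add_pos_nonneg) auto
    ultimately show ?thesis
      by linarith
  qed
  finally have "\<eta> * (c * (1 + \<eta> + \<eta>\<^sup>2)) < \<eta> * ((2 + \<eta>) * (1 - \<eta>))"
    using assms by (intro mult_strict_left_mono) auto
  with pos show ?thesis
    by (simp add: field_simps)
qed

text \<open>\<open>p e\<close> and \<open>q e\<close> are the images of \<open>-\<eta> e\<close> and \<open>\<eta> e\<close> under the inversion in the
  sphere of centre \<open>(1 + \<eta>) e\<close> orthogonal to the unit sphere.\<close>
lemma jstar_ratio_of_inversion_images:
  fixes \<eta> :: real
  assumes \<eta>: "0 < \<eta>" "\<eta> \<le> 1/4"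
  defines "p \<equiv> (1 + \<eta> + \<eta>\<^sup>2) / (1 + 2 * \<eta>)" and "q \<equiv> 1 - \<eta> - \<eta>\<^sup>2"
  shows "0 \<le> q" "q \<le> p" "p < 1" "(p - q) / ((p - q) + 2 * (1 - p)) = \<eta> * (2 + \<eta>) / (1 + \<eta> + \<eta>\<^sup>2)"
proof -
  have "0 < 1 + 2 * \<eta>"
    using \<eta> by simp
  have p1: "1 - p = \<eta> * (1 - \<eta>) / (1 + 2 * \<eta>)"
    and pq: "p - q = 2 * \<eta>\<^sup>2 * (2 + \<eta>) / (1 + 2 * \<eta>)"
    using \<eta> by (simp_all add: p_def q_def field_simps power2_eq_square)
  have "0 < 1 - p" "0 \<le> p - q"
    unfolding p1 pq using \<eta> by simp_all
  then show "q \<le> p" "p < 1"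
    by simp_all
  show "0 \<le> q"
    using \<eta> mult_mono[of \<eta> "1/4" \<eta> "1/4"] by (simp add: q_def power2_eq_square)
  have "2 * \<eta>\<^sup>2 * (2 + \<eta>) + 2 * (\<eta> * (1 - \<eta>)) = 2 * \<eta> * (1 + \<eta> + \<eta>\<^sup>2)"
    by (simp add: algebra_simps power2_eq_square)
  then have "(p - q) + 2 * (1 - p) = 2 * \<eta> * (1 + \<eta> + \<eta>\<^sup>2) / (1 + 2 * \<eta>)"
    unfolding pq p1 by (metis add_divide_distrib times_divide_eq_right)
  then have "(p - q) / ((p - q) + 2 * (1 - p))
      = (2 * \<eta>\<^sup>2 * (2 + \<eta>) / (1 + 2 * \<eta>)) / (2 * \<eta> * (1 + \<eta> + \<eta>\<^sup>2) / (1 + 2 * \<eta>))"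
    unfolding pq by simp
  also have "\<dots> = 2 * \<eta>\<^sup>2 * (2 + \<eta>) / (2 * \<eta> * (1 + \<eta> + \<eta>\<^sup>2))"
    using \<open>0 < 1 + 2 * \<eta>\<close> by simp
  also have "\<dots> = \<eta> * (2 + \<eta>) / (1 + \<eta> + \<eta>\<^sup>2)"
    using \<eta> by (simp add: power2_eq_square)
  finally show "(p - q) / ((p - q) + 2 * (1 - p)) = \<eta> * (2 + \<eta>) / (1 + \<eta> + \<eta>\<^sup>2)" .
qed

lemma exists_ball_mobius_stretching_pair:
  fixes e :: "'a::euclidean_space"
  assumes e: "norm e = 1" and \<eta>: "0 < \<eta>" "\<eta> \<le> 1/4"
  obtains h where "ball_mobius h"
    "jstar_metric (ball 0 1) (the (h (Some ((- \<eta>) *\<^sub>R e)))) (the (h (Some (\<eta> *\<^sub>R e))))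
      = \<eta> * (2 + \<eta>) / (1 + \<eta> + \<eta>\<^sup>2)"
proof -
  define r where "r = sqrt (2 * \<eta> + \<eta>\<^sup>2)"
  have r: "0 < r" "r\<^sup>2 = 2 * \<eta> + \<eta>\<^sup>2"
    using \<eta> by (auto simp: r_def add_pos_nonneg)
  define h where "h = sphere_inversion ((1 + \<eta>) *\<^sub>R e) r"
  have "norm ((1 + \<eta>) *\<^sub>R e) = 1 + \<eta>"
    using \<eta> e by simp
  then have "(norm ((1 + \<eta>) *\<^sub>R e))\<^sup>2 = 1 + r\<^sup>2"
    using r by (simp add: power2_eq_square algebra_simps)
  then have h: "ball_mobius h"
    unfolding h_def by (rule sphere_inversion_orthogonal_ball_mobius[OF r(1)])
  define p q where "p = (1 + \<eta> + \<eta>\<^sup>2) / (1 + 2 * \<eta>)" and "q = 1 - \<eta> - \<eta>\<^sup>2"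
  have "1 + \<eta> + r\<^sup>2 / (- \<eta> - (1 + \<eta>)) = p" "1 + \<eta> + r\<^sup>2 / (\<eta> - (1 + \<eta>)) = q"
    using \<eta> r by (simp_all add: p_def q_def field_simps power2_eq_square)
  then have "h (Some ((- \<eta>) *\<^sub>R e)) = Some (p *\<^sub>R e)" "h (Some (\<eta> *\<^sub>R e)) = Some (q *\<^sub>R e)"
    using sphere_inversion_on_line[OF e, of "- \<eta>" "1 + \<eta>" r]
      sphere_inversion_on_line[OF e, of \<eta> "1 + \<eta>" r] \<eta> by (simp_all add: h_def)
  moreover note jstar_ratio_of_inversion_images[OF \<eta>, folded p_def q_def]
  ultimately show ?thesis
    using that[OF h] jstar_metric_unit_ball_on_ray[OF e, of q p] by simp
qed

lemma ball_mobius_expansion_factor_sharp: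
  fixes d :: "'a::euclidean_space set \<Rightarrow> 'a \<Rightarrow> 'a \<Rightarrow> real"
  assumes d: "d \<in> {jstar_metric, w_metric, s_metric, p_metric}" and "c < 2"
  shows "\<exists>h x y. ball_mobius (h :: 'a option \<Rightarrow> 'a option) \<and> x \<in> ball 0 1 \<and> y \<in> ball 0 1 \<and>
    c * d (ball 0 1) x y < d (ball 0 1) (the (h (Some x))) (the (h (Some y)))"
proof -
  define c' where "c' = max c 0"
  define \<eta> where "\<eta> = min (1/4) ((2 - c') / 8)"
  have \<eta>: "0 < \<eta>" "\<eta> \<le> 1/4" "8 * \<eta> \<le> 2 - c'"
    using \<open>c < 2\<close> by (auto simp: \<eta>_def c'_def)
  obtain e :: 'a where e: "norm e = 1"
    using exists_unit_direction by blast
  define x y where "x = (- \<eta>) *\<^sub>R e" and "y = \<eta> *\<^sub>R e"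
  have xy: "norm x < 1" "norm y < 1"
    using \<eta> e by (simp_all add: x_def y_def)
  obtain h where h: "ball_mobius h"
    and J: "jstar_metric (ball 0 1) (the (h (Some x))) (the (h (Some y))) = \<eta> * (2 + \<eta>) / (1 + \<eta> + \<eta>\<^sup>2)"
    using exists_ball_mobius_stretching_pair[OF e \<eta>(1,2)] by (auto simp: x_def y_def)
  obtain x' y' where "h (Some x) = Some x'" "norm x' < 1" "h (Some y) = Some y'" "norm y' < 1"
    using ball_mobius_Some[OF h xy(1)] ball_mobius_Some[OF h xy(2)] by metis
  then have image: "norm (the (h (Some x))) < 1" "norm (the (h (Some y))) < 1"
    by simp_all
  have "c * d (ball 0 1) x y \<le> c' * d (ball 0 1) x y"
    using ball_metric_between(1)[OF d xy] jstar_metric_unit_ball_nonneg[OF xy]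
    by (intro mult_right_mono) (auto simp: c'_def)
  also have "\<dots> \<le> c' * (\<eta> / (1 - \<eta>))"
    using ball_metric_between(2)[OF d xy] p_metric_unit_ball_symmetric_le[OF e, of \<eta>] \<eta>
    by (intro mult_left_mono) (auto simp: c'_def x_def y_def)
  also have "\<dots> < \<eta> * (2 + \<eta>) / (1 + \<eta> + \<eta>\<^sup>2)"
    using \<eta> by (intro ratio_bound_below_two) (auto simp: c'_def)
  also have "\<dots> \<le> d (ball 0 1) (the (h (Some x))) (the (h (Some y)))"
    using ball_metric_between(1)[OF d image] J by simp
  finally show ?thesis
    using h xy by auto
qed

theorem corollary4p10:
  assumes "DIM('a::euclidean_space) \<ge> 2"
  shows "\<forall>d \<in> {jstar_metric, w_metric, s_metric, p_metric}.
     (\<forall>h x y. ball_mobius (h :: 'a option \<Rightarrow> 'a option) \<and> x \<in> ball 0 1 \<and> y \<in> ball 0 1 \<longrightarrow>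
        d (ball 0 1) (the (h (Some x))) (the (h (Some y)))
          \<le> 2 * d (ball 0 1) x y / (1 + (d (ball 0 1) x y)\<^sup>2)
        \<and> 2 * d (ball 0 1) x y / (1 + (d (ball 0 1) x y)\<^sup>2) \<le> 2 * d (ball 0 1) x y)
   \<and> (\<forall>c < 2. \<exists>h x y. ball_mobius (h :: 'a option \<Rightarrow> 'a option) \<and> x \<in> ball 0 1 \<and> y \<in> ball 0 1 \<and>
        d (ball 0 1) (the (h (Some x))) (the (h (Some y))) > c * d (ball 0 1) x y)"
proof (intro ballI conjI allI impI)
  \<comment> \<open>The argument works in every dimension.\<close>
  fix d :: "'a set \<Rightarrow> 'a \<Rightarrow> 'a \<Rightarrow> real" and h :: "'a option \<Rightarrow> 'a option" and x y :: 'a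
  assume d: "d \<in> {jstar_metric, w_metric, s_metric, p_metric}"
    and "ball_mobius h \<and> x \<in> ball 0 1 \<and> y \<in> ball 0 1"
  then have h: "ball_mobius h" and x: "norm x < 1" and y: "norm y < 1"
    by auto
  show "d (ball 0 1) (the (h (Some x))) (the (h (Some y)))
      \<le> 2 * d (ball 0 1) x y / (1 + (d (ball 0 1) x y)\<^sup>2)"
    by (rule ball_mobius_metric_le[OF d h x y])
  show "2 * d (ball 0 1) x y / (1 + (d (ball 0 1) x y)\<^sup>2) \<le> 2 * d (ball 0 1) x y"
    using ball_metric_between(1)[OF d x y] jstar_metric_unit_ball_nonneg[OF x y]
    by (intro two_div_one_plus_sq_le) simp
next
  fix d :: "'a set \<Rightarrow> 'a \<Rightarrow> 'a \<Rightarrow> real" and c :: real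
  assume "d \<in> {jstar_metric, w_metric, s_metric, p_metric}" and "c < 2"
  then show "\<exists>h x y. ball_mobius (h :: 'a option \<Rightarrow> 'a option) \<and> x \<in> ball 0 1 \<and> y \<in> ball 0 1 \<and>
      d (ball 0 1) (the (h (Some x))) (the (h (Some y))) > c * d (ball 0 1) x y"
    by (rule ball_mobius_expansion_factor_sharp)
qed

end
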